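(* Let $n\ge1$, $p\in(0,1/2]$, $q=1-p$, and let $X_1,\dots,X_n$ be i.i.d. with $P(X_i=1)=P(X_i=-1)=p$, $P(X_i=0)=1-2p$. For $k\in\{1,\dots,n\}$ let $V_k=q^{n-k}$ and $W_k=2\bigl((1-p)^{n-k}-(1-2p)^{n-k}\bigr)$. Let $s$ be the smallest $k\in\{1,\dots,n\}$ with $W_k/V_k<1$. Then the stopping time "stop at the first $m\ge s$ with $X_m\in\{-1,1\}$, and at $m=n$ if there is none" maximizes, over all stopping times $\tau\in\{1,\dots,n\}$ with respect to the natural filtration, the probability that either $X_\tau=1$ and $X_i\ne1$ for all $i>\tau$, or $X_\tau=-1$ and $X_i\ne-1$ for all $i>\tau$. *)

theory Defs
  imports "HOL-Probability.Probability"
begin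

text \<open>Outcomes are sequences omega :: nat => int, where omega i is the value of X_i
  for i in {1..n}; the joint law is the product pmf Pi_pmf {1..n} 0 (%_. D).\<close>

definition V :: "real \<Rightarrow> nat \<Rightarrow> nat \<Rightarrow> real" where
  "V p n k = (1 - p) ^ (n - k)"

definition W :: "real \<Rightarrow> nat \<Rightarrow> nat \<Rightarrow> real" where
  "W p n k = 2 * ((1 - p) ^ (n - k) - (1 - 2 * p) ^ (n - k))"

definition threshold :: "real \<Rightarrow> nat \<Rightarrow> nat" where
  "threshold p n = (LEAST k. 1 \<le> k \<and> k \<le> n \<and> W p n k / V p n k < 1)"

definition stopping_time :: "nat \<Rightarrow> ((nat \<Rightarrow> int) \<Rightarrow> nat) \<Rightarrow> bool" where
  "stopping_time n \<tau> \<longleftrightarrow>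
     (\<forall>\<omega>. \<tau> \<omega> \<in> {1..n}) \<and>
     (\<forall>\<omega> \<omega>' k. (\<forall>i\<in>{1..k}. \<omega> i = \<omega>' i) \<longrightarrow> \<tau> \<omega> = k \<longrightarrow> \<tau> \<omega>' = k)"

definition success :: "nat \<Rightarrow> ((nat \<Rightarrow> int) \<Rightarrow> nat) \<Rightarrow> (nat \<Rightarrow> int) \<Rightarrow> bool" where
  "success n \<tau> \<omega> \<longleftrightarrow>
     (\<omega> (\<tau> \<omega>) = 1 \<and> (\<forall>i\<in>{\<tau> \<omega><..n}. \<omega> i \<noteq> 1)) \<or>
     (\<omega> (\<tau> \<omega>) = -1 \<and> (\<forall>i\<in>{\<tau> \<omega><..n}. \<omega> i \<noteq> -1))"

definition threshold_rule :: "nat \<Rightarrow> nat \<Rightarrow> (nat \<Rightarrow> int) \<Rightarrow> nat" where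
  "threshold_rule s n \<omega> =
     (if \<exists>m. s \<le> m \<and> m \<le> n \<and> \<omega> m \<in> {-1, 1}
      then (LEAST m. s \<le> m \<and> m \<le> n \<and> \<omega> m \<in> {-1, 1}) else n)"

end

theory Submission
  imports Defs
begin

text \<open>Backward induction over the time \<open>a\<close> before which no stop has occurred. Stopping at a
  nonzero \<open>X\<^sub>k\<close> wins iff that value does not recur, which has probability \<open>V\<^sub>k = q\<^bsup>n-k\<^esup>\<close>,
  while stopping at the next nonzero value after \<open>k\<close> wins with probability \<open>W\<^sub>k\<close>. Since
  \<open>W\<^sub>k / V\<^sub>k\<close> decreases in \<open>k\<close>, the function \<open>v(a) = W\<^bsub>max a s - 1\<^esub>\<close> satisfies the Bellman equation
  \<open>v(a) = 2p max(V\<^sub>a, v(a+1)) + (1-2p) v(a+1)\<close>. Hence \<open>v(1)\<close> bounds the success probability of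
  every stopping time, and the threshold rule, which always takes the larger option, attains it.\<close>

subsection \<open>Conditioning on the observed prefix\<close>

definition override_prefix :: "nat \<Rightarrow> (nat \<Rightarrow> 'a) \<Rightarrow> (nat \<Rightarrow> 'a) \<Rightarrow> nat \<Rightarrow> 'a" where
  "override_prefix a h \<omega> = (\<lambda>i. if 1 \<le> i \<and> i < a then h i else \<omega> i)"

lemma override_prefix_1 [simp]: "override_prefix 1 h \<omega> = \<omega>"
  by (simp add: override_prefix_def fun_eq_iff)

lemma override_prefix_fun_upd:
  "1 \<le> a \<Longrightarrow> override_prefix a h (f(a := y)) = override_prefix (Suc a) (h(a := y)) f"
  by (auto simp: override_prefix_def fun_eq_iff)

definition cond_success_prob ::
    "int pmf \<Rightarrow> nat \<Rightarrow> ((nat \<Rightarrow> int) \<Rightarrow> nat) \<Rightarrow> nat \<Rightarrow> (nat \<Rightarrow> int) \<Rightarrow> real" where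
  "cond_success_prob D n \<tau> a h =
     measure_pmf.prob (Pi_pmf {a..n} 0 (\<lambda>_. D)) {\<omega>. success n \<tau> (override_prefix a h \<omega>)}"

lemma set_pmf_subset_if_sum_pmf_eq_1:
  assumes "finite A" "sum (pmf M) A = 1"
  shows "set_pmf M \<subseteq> A"
proof -
  have "measure_pmf.prob M A = 1"
    using assms by (simp add: measure_measure_pmf_finite)
  then have "AE x in measure_pmf M. x \<in> A"
    by (subst (asm) measure_pmf.prob_eq_1) auto
  then show ?thesis
    by (auto simp: AE_measure_pmf_iff)
qed

lemma measure_bind_pmf_finite:
  assumes "finite A" "set_pmf M \<subseteq> A"
  shows "measure_pmf.prob (bind_pmf M N) X = (\<Sum>x\<in>A. measure_pmf.prob (N x) X * pmf M x)"
proof -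
  have "measure_pmf.prob (bind_pmf M N) X = (\<integral>x. measure_pmf.prob (N x) X \<partial>M)"
    unfolding measure_pmf_bind
    by (rule measure_pmf.measure_bind[where N = "count_space UNIV"])
       (auto simp: space_subprob_algebra
             intro: prob_space_imp_subprob_space measure_pmf.prob_space_axioms)
  also have "\<dots> = (\<Sum>x\<in>A. measure_pmf.prob (N x) X * pmf M x)"
    using assms by (intro integral_measure_pmf_real) auto
  finally show ?thesis .
qed

lemma prob_Pi_pmf_override_prefix_split:
  assumes "1 \<le> a" "a \<le> n" "finite A" "set_pmf D \<subseteq> A"
  shows "measure_pmf.prob (Pi_pmf {a..n} 0 (\<lambda>_. D)) {\<omega>. \<Phi> (override_prefix a h \<omega>)} =
    (\<Sum>y\<in>A. measure_pmf.prob (Pi_pmf {Suc a..n} 0 (\<lambda>_. D))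
               {\<omega>. \<Phi> (override_prefix (Suc a) (h(a := y)) \<omega>)} * pmf D y)"
proof -
  have "{a..n} = insert a {Suc a..n}"
    using assms by auto
  then have "Pi_pmf {a..n} 0 (\<lambda>_. D) =
      bind_pmf D (\<lambda>y. map_pmf (\<lambda>f. f(a := y)) (Pi_pmf {Suc a..n} 0 (\<lambda>_. D)))"
    by (simp add: Pi_pmf_insert' map_pmf_def)
  then show ?thesis
    using assms by (simp add: measure_bind_pmf_finite vimage_def override_prefix_fun_upd)
qed

lemma prob_Pi_pmf_avoid:
  "measure_pmf.prob (Pi_pmf {Suc a..n} 0 (\<lambda>_. D)) {\<omega>. \<forall>i\<in>{a<..n}. \<omega> i \<noteq> c} =
     (1 - pmf D c) ^ (n - a)"
proof -
  have "{\<omega>. \<forall>i\<in>{a<..n}. \<omega> i \<noteq> c} = Pi {Suc a..n} (\<lambda>_. - {c})"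
    by (auto simp: Pi_def Suc_le_eq)
  moreover have "measure_pmf.prob D (- {c}) = 1 - pmf D c"
    using measure_pmf.prob_compl[of "{c}" D] by (simp add: Compl_eq_Diff_UNIV measure_pmf_single)
  ultimately show ?thesis
    by (simp add: measure_Pi_pmf_Pi)
qed

lemma cond_success_prob_stopped:
  assumes "1 \<le> a" "\<And>f. \<tau> (override_prefix (Suc a) (h(a := y)) f) = a"
  shows "cond_success_prob D n \<tau> (Suc a) (h(a := y)) =
           (if y \<in> {-1, 1} then (1 - pmf D y) ^ (n - a) else 0)"
proof -
  have "{f. success n \<tau> (override_prefix (Suc a) (h(a := y)) f)} =
          (if y \<in> {-1, 1} then {f. \<forall>i\<in>{a<..n}. f i \<noteq> y} else {})"
    using assms by (auto simp: success_def override_prefix_def)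
  then show ?thesis
    by (simp add: cond_success_prob_def prob_Pi_pmf_avoid)
qed

lemma stopping_time_range: "stopping_time n \<tau> \<Longrightarrow> \<tau> f \<in> {1..n}"
  unfolding stopping_time_def by (drule conjunct1) (erule spec)

lemma stopping_time_determined:
  assumes "stopping_time n \<tau>" "\<tau> f = k" "\<And>i. 1 \<le> i \<Longrightarrow> i \<le> k \<Longrightarrow> f i = g i"
  shows "\<tau> g = k"
proof -
  have "\<forall>f g k. (\<forall>i\<in>{1..k}. f i = g i) \<longrightarrow> \<tau> f = k \<longrightarrow> \<tau> g = k"
    using assms(1) unfolding stopping_time_def by (rule conjunct2)
  from this[rule_format, of k f g] show ?thesis
    using assms(2,3) by simp
qed

lemma stopping_time_stops_now_or_later:
  assumes \<tau>: "stopping_time n \<tau>" and "1 \<le> m" and later: "\<And>\<omega>. m \<le> \<tau> (override_prefix m h \<omega>)"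
  obtains "\<And>\<omega>. \<tau> (override_prefix (Suc m) (h(m := y)) \<omega>) = m"
        | "\<And>\<omega>. Suc m \<le> \<tau> (override_prefix (Suc m) (h(m := y)) \<omega>)"
proof (cases "\<exists>\<omega>\<^sub>0. \<tau> (override_prefix (Suc m) (h(m := y)) \<omega>\<^sub>0) = m")
  case True
  then obtain \<omega>\<^sub>0 where "\<tau> (override_prefix (Suc m) (h(m := y)) \<omega>\<^sub>0) = m" ..
  then have "\<tau> (override_prefix (Suc m) (h(m := y)) \<omega>) = m" for \<omega>
    by (rule stopping_time_determined[OF \<tau>]) (simp add: override_prefix_def)
  then show ?thesis
    by (rule that(1))
next
  case False
  have "m \<le> \<tau> (override_prefix (Suc m) (h(m := y)) f)" for f
    using later[of "f(m := y)"] \<open>1 \<le> m\<close> by (simp add: override_prefix_fun_upd)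
  then have "Suc m \<le> \<tau> (override_prefix (Suc m) (h(m := y)) f)" for f
    using False by (metis Suc_leI le_neq_trans)
  then show ?thesis
    by (rule that(2))
qed

lemma threshold_rule_eqI:
  assumes "s \<le> a" "a \<le> n" "\<omega> a \<in> {-1, 1}" "\<And>m. s \<le> m \<Longrightarrow> m < a \<Longrightarrow> \<omega> m \<notin> {-1, 1}"
  shows "threshold_rule s n \<omega> = a"
proof -
  have "(LEAST m. s \<le> m \<and> m \<le> n \<and> \<omega> m \<in> {-1, 1}) = a"
    using assms by (intro Least_equality) (auto simp: not_less[symmetric])
  then show ?thesis
    using assms by (auto simp: threshold_rule_def)
qed

lemma threshold_rule_eq_last:
  "(\<And>m. s \<le> m \<Longrightarrow> m \<le> n \<Longrightarrow> \<omega> m \<notin> {-1, 1}) \<Longrightarrow> threshold_rule s n \<omega> = n"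
  by (auto simp: threshold_rule_def)

lemma threshold_rule_bounds: "s \<le> n \<Longrightarrow> threshold_rule s n \<omega> \<in> {s..n}"
  using LeastI_ex[of "\<lambda>m. s \<le> m \<and> m \<le> n \<and> \<omega> m \<in> {-1, 1}"] by (auto simp: threshold_rule_def)

lemma stopping_time_threshold_rule:
  assumes "1 \<le> s" "s \<le> n"
  shows "stopping_time n (threshold_rule s n)"
  unfolding stopping_time_def
proof (intro conjI allI impI)
  fix \<omega>
  show "threshold_rule s n \<omega> \<in> {1..n}"
    using threshold_rule_bounds[of s n \<omega>] assms by auto
next
  fix \<omega> \<omega>' k
  assume agree: "\<forall>i\<in>{1..k}. \<omega> i = \<omega>' i" and stop: "threshold_rule s n \<omega> = k"
  show "threshold_rule s n \<omega>' = k"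
  proof (cases "\<exists>m. s \<le> m \<and> m \<le> n \<and> \<omega> m \<in> {-1, 1}")
    case True
    let ?P = "\<lambda>m. s \<le> m \<and> m \<le> n \<and> \<omega> m \<in> {-1, 1}"
    have k: "k = (LEAST m. ?P m)"
      using stop True by (simp add: threshold_rule_def)
    have "?P k"
      unfolding k using True by (rule LeastI_ex)
    moreover have "\<not> ?P m" if "m < k" for m
      using k that by (blast dest: not_less_Least)
    ultimately show ?thesis
      using agree assms by (intro threshold_rule_eqI) auto
  next
    case False
    then have "k = n"
      using stop threshold_rule_eq_last[of s n \<omega>] by blast
    moreover have "\<omega>' m \<notin> {-1, 1}" if "s \<le> m" "m \<le> n" for m
      using False agree assms that \<open>k = n\<close> by fastforce
    ultimately show ?thesis
      by (simp add: threshold_rule_eq_last)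
  qed
qed

definition win_prob :: "real \<Rightarrow> nat \<Rightarrow> real" where
  "win_prob p M = 2 * ((1 - p) ^ M - (1 - 2 * p) ^ M)"

lemma win_prob_Suc: "win_prob p (Suc M) = 2 * p * (1 - p) ^ M + (1 - 2 * p) * win_prob p M"
  by (simp add: win_prob_def algebra_simps)

lemma win_prob_nonneg: "0 \<le> p \<Longrightarrow> p \<le> 1/2 \<Longrightarrow> 0 \<le> win_prob p M"
  unfolding win_prob_def by (auto intro!: power_mono)

lemma W_eq_win_prob: "W p n k = win_prob p (n - k)"
  by (simp add: W_def win_prob_def)

lemma power_less_mult_power_antimono:
  fixes q r c :: real
  assumes "0 \<le> r" "r \<le> q" "0 < q" "0 \<le> c" "M' \<le> M" "q ^ M < c * r ^ M"
  shows "q ^ M' < c * r ^ M'"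
proof -
  obtain d where d: "M = M' + d"
    using \<open>M' \<le> M\<close> le_Suc_ex by blast
  have "q ^ M' * q ^ d < c * r ^ M' * r ^ d"
    using assms(6) by (simp add: d power_add mult.assoc)
  also have "\<dots> \<le> c * r ^ M' * q ^ d"
    using assms by (intro mult_left_mono power_mono) auto
  finally show ?thesis
    using \<open>0 < q\<close> by simp
qed

text \<open>The optimal success probability when no stop has occurred before time \<open>a\<close>.\<close>

definition opt_value :: "real \<Rightarrow> nat \<Rightarrow> nat \<Rightarrow> real" where
  "opt_value p n a = win_prob p (n + 1 - max a (threshold p n))"

context
  fixes n :: nat and p :: real
  assumes n: "1 \<le> n" and p: "0 < p" "p \<le> 1/2"
begin

lemma W_div_V_less_1_iff: "W p n k / V p n k < 1 \<longleftrightarrow> W p n k < V p n k"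
  using p by (simp add: V_def divide_less_eq)

lemma threshold_bounds: "1 \<le> threshold p n" "threshold p n \<le> n"
  and W_less_V_threshold: "W p n (threshold p n) < V p n (threshold p n)"
proof -
  have "1 \<le> n \<and> n \<le> n \<and> W p n n / V p n n < 1"
    using n by (simp add: W_def V_def)
  then have "1 \<le> threshold p n \<and> threshold p n \<le> n \<and> W p n (threshold p n) < V p n (threshold p n)"
    unfolding threshold_def W_div_V_less_1_iff[symmetric] by (rule LeastI)
  then show "1 \<le> threshold p n" "threshold p n \<le> n" "W p n (threshold p n) < V p n (threshold p n)"
    by auto
qed

lemma V_le_W_before_threshold:
  assumes "1 \<le> k" "k < threshold p n"
  shows "V p n k \<le> W p n k"
proof -
  have "\<not> (1 \<le> k \<and> k \<le> n \<and> W p n k / V p n k < 1)"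
    using assms(2) unfolding threshold_def by (rule not_less_Least)
  then show ?thesis
    using assms threshold_bounds by (auto simp: W_div_V_less_1_iff)
qed

lemma W_less_V_from_threshold:
  assumes "threshold p n \<le> k" "k \<le> n"
  shows "W p n k < V p n k"
proof -
  have "(1 - p) ^ (n - threshold p n) < 2 * (1 - 2 * p) ^ (n - threshold p n)"
    using W_less_V_threshold by (simp add: W_def V_def algebra_simps)
  then have "(1 - p) ^ (n - k) < 2 * (1 - 2 * p) ^ (n - k)"
    by (rule power_less_mult_power_antimono[rotated 5]) (use p assms in auto)
  then show ?thesis
    by (simp add: W_def V_def algebra_simps)
qed

lemma opt_value_nonneg: "0 \<le> opt_value p n a"
  using p by (simp add: opt_value_def win_prob_nonneg)

lemma opt_value_after_last: "opt_value p n (Suc n) = 0"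
  by (simp add: opt_value_def win_prob_def)

lemma opt_value_from_threshold:
  assumes "threshold p n \<le> a" "a \<le> n"
  shows "opt_value p n (Suc a) < (1 - p) ^ (n - a)"
    and "opt_value p n a = 2 * p * (1 - p) ^ (n - a) + (1 - 2 * p) * opt_value p n (Suc a)"
proof -
  have Suc_a: "opt_value p n (Suc a) = W p n a"
    using assms by (simp add: opt_value_def W_eq_win_prob)
  then show "opt_value p n (Suc a) < (1 - p) ^ (n - a)"
    using W_less_V_from_threshold[OF assms] by (simp add: V_def)
  have "opt_value p n a = win_prob p (Suc (n - a))"
    using assms by (simp add: opt_value_def Suc_diff_le)
  then show "opt_value p n a = 2 * p * (1 - p) ^ (n - a) + (1 - 2 * p) * opt_value p n (Suc a)"
    using Suc_a by (simp add: win_prob_Suc W_eq_win_prob)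
qed

lemma opt_value_before_threshold:
  assumes "1 \<le> a" "a < threshold p n"
  shows "opt_value p n (Suc a) = opt_value p n a" and "(1 - p) ^ (n - a) \<le> opt_value p n (Suc a)"
proof -
  show "opt_value p n (Suc a) = opt_value p n a"
    using assms by (simp add: opt_value_def)
  let ?k = "threshold p n - 1"
  have "(1 - p) ^ (n - a) \<le> V p n ?k"
    unfolding V_def using assms p threshold_bounds by (intro power_decreasing) auto
  also have "\<dots> \<le> W p n ?k"
    using assms threshold_bounds by (intro V_le_W_before_threshold) auto
  also have "\<dots> = opt_value p n (Suc a)"
    using assms threshold_bounds by (simp add: opt_value_def W_eq_win_prob)
  finally show "(1 - p) ^ (n - a) \<le> opt_value p n (Suc a)" .
qed

lemma opt_value_Bellman:
  assumes "1 \<le> a" "a \<le> n"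
  shows "2 * p * max ((1 - p) ^ (n - a)) (opt_value p n (Suc a)) + (1 - 2 * p) * opt_value p n (Suc a)
           \<le> opt_value p n a"
proof (cases "threshold p n \<le> a")
  case True
  with opt_value_from_threshold[OF True assms(2)] show ?thesis
    by (simp add: max_def)
next
  case False
  with opt_value_before_threshold[OF assms(1)] show ?thesis
    by (simp add: max_def algebra_simps)
qed

subsection \<open>Backward induction\<close>

context
  fixes D :: "int pmf"
  assumes D: "pmf D 1 = p" "pmf D (-1) = p" "pmf D 0 = 1 - 2 * p"
begin

lemma cond_success_prob_recursion:
  assumes "1 \<le> a" "a \<le> n"
  shows "cond_success_prob D n \<tau> a h =
           p * cond_success_prob D n \<tau> (Suc a) (h(a := -1))
         + (1 - 2 * p) * cond_success_prob D n \<tau> (Suc a) (h(a := 0))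
         + p * cond_success_prob D n \<tau> (Suc a) (h(a := 1))"
proof -
  have "set_pmf D \<subseteq> {-1, 0, 1}"
    using D by (intro set_pmf_subset_if_sum_pmf_eq_1) auto
  with assms show ?thesis
    unfolding cond_success_prob_def
    by (subst prob_Pi_pmf_override_prefix_split[where A = "{-1, 0, 1}"]) (auto simp: D algebra_simps)
qed

lemma cond_success_prob_stopped':
  assumes "1 \<le> a" "\<And>f. \<tau> (override_prefix (Suc a) (h(a := y)) f) = a"
  shows "cond_success_prob D n \<tau> (Suc a) (h(a := y)) = (if y \<in> {-1, 1} then (1 - p) ^ (n - a) else 0)"
  using cond_success_prob_stopped[where \<tau> = \<tau> and h = h and y = y, OF assms] D by auto

lemma cond_success_prob_le_opt_value:
  assumes \<tau>: "stopping_time n \<tau>"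
    and "a \<le> Suc n" "1 \<le> a" "\<And>\<omega>. a \<le> \<tau> (override_prefix a h \<omega>)"
  shows "cond_success_prob D n \<tau> a h \<le> opt_value p n a"
  using assms(2-)
proof (induction a arbitrary: h rule: inc_induct)
  case base
  then have "Suc n \<le> \<tau> (override_prefix (Suc n) h (\<lambda>_. 0))"
    by blast
  then show ?case
    using stopping_time_range[OF \<tau>, of "override_prefix (Suc n) h (\<lambda>_. 0)"] by simp
next
  case (step m)
  let ?v = "opt_value p n (Suc m)" and ?V = "(1 - p) ^ (n - m)"
  have bound: "cond_success_prob D n \<tau> (Suc m) (h(m := y)) \<le> (if y = 0 then ?v else max ?V ?v)" for y
  proof (cases rule: stopping_time_stops_now_or_later[OF \<tau> step.prems(1,2), where y = y])
    case 1
    then have "cond_success_prob D n \<tau> (Suc m) (h(m := y)) = (if y \<in> {-1, 1} then ?V else 0)"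
      by (rule cond_success_prob_stopped'[OF \<open>1 \<le> m\<close>])
    then show ?thesis
      using opt_value_nonneg[of "Suc m"] by (auto simp: le_max_iff_disj)
  next
    case 2
    have "cond_success_prob D n \<tau> (Suc m) (h(m := y)) \<le> ?v"
      by (rule step.IH) (simp, rule 2)
    then show ?thesis
      by (auto simp: le_max_iff_disj)
  qed
  have "cond_success_prob D n \<tau> m h \<le> p * max ?V ?v + (1 - 2 * p) * ?v + p * max ?V ?v"
    unfolding cond_success_prob_recursion[OF step.prems(1) step.hyps(2)[simplified less_Suc_eq_le]]
    using p bound[of "-1"] bound[of 0] bound[of 1] by (intro add_mono mult_left_mono) auto
  also have "\<dots> \<le> opt_value p n m"
    using opt_value_Bellman[OF step.prems(1)] step.hyps(2) by (simp add: algebra_simps)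
  finally show ?case .
qed

lemma cond_success_prob_threshold_rule:
  assumes "a \<le> Suc n" "1 \<le> a" "\<And>i. threshold p n \<le> i \<Longrightarrow> i < a \<Longrightarrow> h i \<notin> {-1, 1}"
  shows "cond_success_prob D n (threshold_rule (threshold p n) n) a h = opt_value p n a"
  using assms
proof (induction a arbitrary: h rule: inc_induct)
  case base
  have "\<not> success n (threshold_rule (threshold p n) n) (override_prefix (Suc n) h f)" for f
  proof -
    have none: "override_prefix (Suc n) h f m \<notin> {-1, 1}" if "threshold p n \<le> m" "m \<le> n" for m
      using base.prems(2) that threshold_bounds by (auto simp: override_prefix_def)
    then have "threshold_rule (threshold p n) n (override_prefix (Suc n) h f) = n"
      by (rule threshold_rule_eq_last)
    with none[of n] threshold_bounds show ?thesis
      by (auto simp: success_def)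
  qed
  then show ?case
    by (simp add: cond_success_prob_def opt_value_after_last)
next
  case (step m)
  let ?s = "threshold p n" and ?v = "opt_value p n (Suc m)"
  have next_value: "cond_success_prob D n (threshold_rule ?s n) (Suc m) (h(m := y)) =
                 (if ?s \<le> m \<and> y \<in> {-1, 1} then (1 - p) ^ (n - m) else ?v)" for y
  proof (cases "?s \<le> m \<and> y \<in> {-1, 1}")
    case True
    have "threshold_rule ?s n (override_prefix (Suc m) (h(m := y)) f) = m" for f
      using True step.hyps step.prems threshold_bounds
      by (intro threshold_rule_eqI) (auto simp: override_prefix_def)
    with True show ?thesis
      using cond_success_prob_stopped'[OF step.prems(1)] by simp
  next
    case False
    have "cond_success_prob D n (threshold_rule ?s n) (Suc m) (h(m := y)) = ?v"
      using False step.prems(2) by (intro step.IH) (auto simp: less_Suc_eq)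
    with False show ?thesis
      by auto
  qed
  have m_le_n: "m \<le> n"
    using step.hyps(2) by simp
  show ?case
  proof (cases "?s \<le> m")
    case True
    then show ?thesis
      unfolding cond_success_prob_recursion[OF step.prems(1) m_le_n] next_value
      using opt_value_from_threshold(2)[OF True m_le_n] by (simp add: algebra_simps)
  next
    case False
    then show ?thesis
      unfolding cond_success_prob_recursion[OF step.prems(1) m_le_n] next_value
      using opt_value_before_threshold(1)[OF step.prems(1)] by (simp add: algebra_simps)
  qed
qed

end

end

theorem mainTheorem8:
  fixes n :: nat and p :: real and D :: "int pmf"
  assumes "n \<ge> 1" and "0 < p" and "p \<le> 1/2"
    and "pmf D 1 = p" and "pmf D (-1) = p" and "pmf D 0 = 1 - 2 * p"
  defines "P \<equiv> Pi_pmf {1..n} 0 (\<lambda>_. D)"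
  shows "stopping_time n (threshold_rule (threshold p n) n) \<and>
    (\<forall>\<tau>. stopping_time n \<tau> \<longrightarrow>
      measure_pmf.prob P {\<omega>. success n \<tau> \<omega>}
        \<le> measure_pmf.prob P {\<omega>. success n (threshold_rule (threshold p n) n) \<omega>})"
proof (intro conjI allI impI)
  note bounds = threshold_bounds[OF assms(1-3)]
  have success_prob: "measure_pmf.prob P {\<omega>. success n \<tau> \<omega>} = cond_success_prob D n \<tau> 1 (\<lambda>_. 0)" for \<tau>
    by (simp only: P_def cond_success_prob_def override_prefix_1)
  show "stopping_time n (threshold_rule (threshold p n) n)"
    using bounds by (rule stopping_time_threshold_rule)
  fix \<tau>
  assume \<tau>: "stopping_time n \<tau>"
  have "cond_success_prob D n \<tau> 1 (\<lambda>_. 0) \<le> opt_value p n 1"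
    using stopping_time_range[OF \<tau>]
    by (intro cond_success_prob_le_opt_value[OF assms(1-6) \<tau>]) auto
  also have "\<dots> = cond_success_prob D n (threshold_rule (threshold p n) n) 1 (\<lambda>_. 0)"
    using bounds by (intro cond_success_prob_threshold_rule[OF assms(1-6), symmetric]) auto
  finally show "measure_pmf.prob P {\<omega>. success n \<tau> \<omega>}
        \<le> measure_pmf.prob P {\<omega>. success n (threshold_rule (threshold p n) n) \<omega>}"
    unfolding success_prob .
qed

end
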